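(* Let $n\ge1$. The coefficient of $x^{n-1}$ in the expansion of \[\frac{G(x)-H(x)}{x^2}\,(1+a(x)x^2)\] has the form $u\big(a_{n-1}+S_0(n)+S_1(n)v+S_2(n)v^2+\cdots+S_n(n)v^n\big)$, where $u=2j-1$, $v=j(j-1)$, and each $S_i(n)$ is a polynomial in $a_0,a_1,\dots,a_{n-2}$ with rational coefficients which is independent of $j$. In particular, $S_0(1)=0$ and $S_1(1)=\tfrac16$.
   Context: $j$ is a positive integer; $a_0,a_1,\dots$ are indeterminates and $a(x)=\sum_{i\ge0}a_ix^i$ (formal power series in $x$). Set $G(x)=\prod_{i=0}^{j-1}\frac{1+a(x)x^2}{1+ix}$ and $H(x)=\prod_{i=1-j}^{-1}\frac{1+ix}{1+a(x)x^2}$ (so $G(x)=1+a(x)x^2$ and $H(x)=1$ when $j=1$), viewed as formal power series in $x$. *)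

theory Defs
  imports "HOL-Library.Poly_Mapping" "HOL-Computational_Algebra.Formal_Power_Series"
    "HOL-Computational_Algebra.Fraction_Field"
begin

text \<open>Polynomials with rational coefficients in the indeterminates a_0, a_1, ...:
  a polynomial is a finitely supported map from monomials (finitely supported
  exponent vectors nat =>0 nat; variable k stands for a_k) to rational coefficients.\<close>
type_synonym mpoly_q = "(nat \<Rightarrow>\<^sub>0 nat) \<Rightarrow>\<^sub>0 rat"

type_synonym ratfun_q = "mpoly_q fract"

definition mp_var :: "nat \<Rightarrow> mpoly_q" where
  "mp_var k = Poly_Mapping.single (Poly_Mapping.single k 1) 1"

definition mp_const :: "rat \<Rightarrow> mpoly_q" where
  "mp_const c = Poly_Mapping.single 0 c"

definition mp_vars :: "mpoly_q \<Rightarrow> nat set" where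
  "mp_vars p = \<Union> ((\<lambda>m :: nat \<Rightarrow>\<^sub>0 nat. Poly_Mapping.keys m) ` Poly_Mapping.keys p)"

definition emb :: "mpoly_q \<Rightarrow> ratfun_q" where
  "emb p = Fract p 1"

definition aser :: "ratfun_q fps" where
  "aser = Abs_fps (\<lambda>i. emb (mp_var i))"

definition Gser :: "nat \<Rightarrow> ratfun_q fps" where
  "Gser j = (\<Prod>i\<in>{0..<j}. (1 + aser * fps_X ^ 2) / (1 + of_nat i * fps_X))"

definition Hser :: "nat \<Rightarrow> ratfun_q fps" where
  "Hser j = (\<Prod>i\<in>{1 - int j..-1}. (1 + of_int i * fps_X) / (1 + aser * fps_X ^ 2))"

end

(*
  Let \<Gamma>(y, x) = \<Sum>_m g_m(y) x^m be the power series with polynomial coefficients g_m determined by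
  \<Gamma>(y + 1, x) (1 + y x) = \<Gamma>(y, x) (1 + a(x) x^2) and \<Gamma>(0, x) = 1. Telescoping the defining
  products gives G = \<Gamma>(j, -) and H = \<Gamma>(1 - j, -), so the coefficient in question is P_n(j) for a
  polynomial P_n of degree at most 2n + 2 with P_n(1 - y) = - P_n(y). Such a polynomial has the form
  (2y - 1) B(y^2 - y) with deg B <= n. The variable a_(n-1) enters P_n only through the term
  a_(n-1) y of g_(n+1); all other coefficients lie in Q[a_0, ..., a_(n-2)]. For n = 1 the explicit
  g_2 gives S_1(1) = 1/6.
*)
theory Submission
  imports Defs "HOL-Computational_Algebra.Polynomial"
begin

instance fract :: ("{idom, ring_char_0}") field_char_0
  by standard (auto intro!: injI simp: of_nat_fract eq_fract)

lemma emb_add: "emb (p + q) = emb p + emb q"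
  by (simp add: emb_def)

lemma emb_mult: "emb (p * q) = emb p * emb q"
  by (simp add: emb_def)

lemma emb_uminus: "emb (- p) = - emb p"
  by (simp add: emb_def)

lemma emb_of_int: "emb (of_int k) = of_int k"
  by (cases k rule: int_cases2) (simp_all add: emb_def of_nat_fract)

lemma emb_mp_const: "emb (mp_const r) = of_rat r"
proof -
  obtain a b where r: "r = of_int a / of_int b" and b: "b > 0"
    by (rule Rats_cases' [of r]) (auto simp: Rats_def)
  have "mp_const r * of_int b = mp_const (r * of_int b)"
    using mult_single [of 0 r 0 "of_int b"] by (simp add: mp_const_def)
  also have "\<dots> = of_int a"
    using b by (simp add: r mp_const_def)
  finally have "emb (mp_const r) * of_int b = of_int a"
    by (metis emb_mult emb_of_int)
  then show ?thesis
    using b by (simp add: r of_rat_divide eq_divide_eq)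
qed

lemma mp_vars_add: "mp_vars (p + q) \<subseteq> mp_vars p \<union> mp_vars q"
  unfolding mp_vars_def using keys_add [of p q] by auto

lemma mp_vars_mult: "mp_vars (p * q) \<subseteq> mp_vars p \<union> mp_vars q"
proof
  fix k assume "k \<in> mp_vars (p * q)"
  then obtain m :: "nat \<Rightarrow>\<^sub>0 nat" where m: "m \<in> Poly_Mapping.keys (p * q)" "k \<in> Poly_Mapping.keys m"
    unfolding mp_vars_def by auto
  then obtain m1 m2 where "m = m1 + m2" "m1 \<in> Poly_Mapping.keys p" "m2 \<in> Poly_Mapping.keys q"
    using keys_mult [of p q] by auto
  with m show "k \<in> mp_vars p \<union> mp_vars q"
    using keys_add [of m1 m2] unfolding mp_vars_def by auto
qed

lemma mp_vars_uminus: "mp_vars (- p) = mp_vars p"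
  by (simp add: mp_vars_def)

lemma mp_vars_mp_const: "mp_vars (mp_const c) = {}"
  by (simp add: mp_vars_def mp_const_def)

lemma mp_vars_mp_var: "mp_vars (mp_var k) \<subseteq> {k}"
  by (simp add: mp_vars_def mp_var_def)

definition polys_below :: "nat \<Rightarrow> ratfun_q set" where
  "polys_below N = emb ` {p. mp_vars p \<subseteq> {..<N}}"

lemma emb_in_polys_below: "mp_vars p \<subseteq> {..<N} \<Longrightarrow> emb p \<in> polys_below N"
  by (auto simp: polys_below_def)

lemma polys_below_add: "x \<in> polys_below N \<Longrightarrow> y \<in> polys_below N \<Longrightarrow> x + y \<in> polys_below N"
  using mp_vars_add by (fastforce simp: polys_below_def emb_add [symmetric])

lemma polys_below_mult: "x \<in> polys_below N \<Longrightarrow> y \<in> polys_below N \<Longrightarrow> x * y \<in> polys_below N"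
  using mp_vars_mult by (fastforce simp: polys_below_def emb_mult [symmetric])

lemma polys_below_uminus: "x \<in> polys_below N \<Longrightarrow> - x \<in> polys_below N"
  by (auto simp: polys_below_def mp_vars_uminus emb_uminus [symmetric])

lemma polys_below_diff: "x \<in> polys_below N \<Longrightarrow> y \<in> polys_below N \<Longrightarrow> x - y \<in> polys_below N"
  using polys_below_add [of x N "- y"] polys_below_uminus by simp

lemma Rats_in_polys_below: "x \<in> \<rat> \<Longrightarrow> x \<in> polys_below N"
  by (auto simp: Rats_def emb_mp_const [symmetric] mp_vars_mp_const intro: emb_in_polys_below)

lemma var_in_polys_below: "k < N \<Longrightarrow> emb (mp_var k) \<in> polys_below N"
  using mp_vars_mp_var by (fastforce intro: emb_in_polys_below)

lemma polys_below_mono: "x \<in> polys_below N \<Longrightarrow> N \<le> M \<Longrightarrow> x \<in> polys_below M"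
  by (force simp: polys_below_def)

lemma polys_below_sum: "(\<And>i. i \<in> A \<Longrightarrow> f i \<in> polys_below N) \<Longrightarrow> (\<Sum>i\<in>A. f i) \<in> polys_below N"
  by (induction A rule: infinite_finite_induct) (auto intro: polys_below_add Rats_in_polys_below)

definition coeffs_below :: "nat \<Rightarrow> ratfun_q poly \<Rightarrow> bool" where
  "coeffs_below N p \<longleftrightarrow> (\<forall>i. coeff p i \<in> polys_below N)"

lemma coeffs_below_add: "coeffs_below N p \<Longrightarrow> coeffs_below N q \<Longrightarrow> coeffs_below N (p + q)"
  by (simp add: coeffs_below_def polys_below_add)

lemma coeffs_below_diff: "coeffs_below N p \<Longrightarrow> coeffs_below N q \<Longrightarrow> coeffs_below N (p - q)"
  by (simp add: coeffs_below_def polys_below_diff)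

lemma coeffs_below_smult: "c \<in> polys_below N \<Longrightarrow> coeffs_below N p \<Longrightarrow> coeffs_below N (smult c p)"
  by (simp add: coeffs_below_def polys_below_mult)

lemma coeffs_below_mult: "coeffs_below N p \<Longrightarrow> coeffs_below N q \<Longrightarrow> coeffs_below N (p * q)"
  unfolding coeffs_below_def coeff_mult by (auto intro!: polys_below_sum polys_below_mult)

lemma coeffs_below_pCons: "c \<in> polys_below N \<Longrightarrow> coeffs_below N p \<Longrightarrow> coeffs_below N (pCons c p)"
  by (simp add: coeffs_below_def coeff_pCons split: nat.split)

lemma coeffs_below_0: "coeffs_below N 0"
  by (simp add: coeffs_below_def Rats_in_polys_below)

lemma coeffs_below_Rats: "(\<And>i. coeff p i \<in> \<rat>) \<Longrightarrow> coeffs_below N p"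
  by (simp add: coeffs_below_def Rats_in_polys_below)

lemma coeffs_below_sum:
  "(\<And>i. i \<in> A \<Longrightarrow> coeffs_below N (f i)) \<Longrightarrow> coeffs_below N (\<Sum>i\<in>A. f i)"
  by (induction A rule: infinite_finite_induct) (auto intro: coeffs_below_0 coeffs_below_add)

lemma coeffs_below_mono: "coeffs_below N p \<Longrightarrow> N \<le> M \<Longrightarrow> coeffs_below M p"
  by (auto simp: coeffs_below_def intro: polys_below_mono)

lemma coeffs_below_pcompose:
  assumes "coeffs_below N p" "coeffs_below N q"
  shows "coeffs_below N (pcompose p q)"
  using assms
proof (induction p)
  case (pCons a p)
  then have "a \<in> polys_below N" "coeffs_below N p"
    unfolding coeffs_below_def by (metis coeff_pCons_0, metis coeff_pCons_Suc)
  with pCons show ?case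
    by (auto simp: pcompose_pCons intro!: coeffs_below_add coeffs_below_pCons coeffs_below_0 coeffs_below_mult)
qed (simp add: coeffs_below_0)

lemma coeffs_below_linear: "a \<in> \<rat> \<Longrightarrow> b \<in> \<rat> \<Longrightarrow> coeffs_below N [:a, b:]"
  by (intro coeffs_below_pCons coeffs_below_0 Rats_in_polys_below)

text \<open>\<open>power_sum_poly d\<close> is the polynomial \<open>F\<close> with \<open>F 0 = 0\<close> and \<open>F (x + 1) - F x = x ^ d\<close>; the
  recursion is the binomial expansion of \<open>(x + 1) ^ (d + 1) - x ^ (d + 1)\<close>.\<close>

fun power_sum_poly :: "nat \<Rightarrow> 'a::field_char_0 poly" where
  "power_sum_poly d = smult (inverse (of_nat (Suc d)))
     (monom 1 (Suc d) - (\<Sum>i<d. smult (of_nat (Suc d choose i)) (power_sum_poly i)))"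

declare power_sum_poly.simps [simp del]

lemma power_sum_poly_0: "power_sum_poly 0 = [:0, 1:]"
  by (subst power_sum_poly.simps) (simp add: monom_Suc)

lemma poly_power_sum_poly_0: "poly (power_sum_poly d) 0 = 0"
proof (induction d rule: less_induct)
  case (less d)
  then show ?case
    by (subst power_sum_poly.simps) (simp add: poly_sum poly_monom)
qed

lemma degree_power_sum_poly: "degree (power_sum_poly d) \<le> Suc d"
proof (induction d rule: less_induct)
  case (less d)
  have "degree (\<Sum>i<d. smult (of_nat (Suc d choose i)) (power_sum_poly i) :: 'a poly) \<le> Suc d"
    by (rule degree_sum_le) (auto intro: order.trans [OF degree_smult_le] order.trans [OF less])
  then have "degree (monom 1 (Suc d) - (\<Sum>i<d. smult (of_nat (Suc d choose i)) (power_sum_poly i))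
      :: 'a poly) \<le> Suc d"
    by (intro degree_diff_le degree_monom_le)
  then show ?case
    by (subst power_sum_poly.simps) (rule order.trans [OF degree_smult_le])
qed

lemma poly_power_sum_poly_diff: "poly (power_sum_poly d) (x + 1) - poly (power_sum_poly d) x = x ^ d"
proof (induction d rule: less_induct)
  case (less d)
  have "(x + 1) ^ Suc d = (\<Sum>i\<le>Suc d. of_nat (Suc d choose i) * x ^ i)"
    by (subst binomial_ring) simp
  then have "(x + 1) ^ Suc d - x ^ Suc d = (\<Sum>i\<le>d. of_nat (Suc d choose i) * x ^ i)"
    by (simp add: sum.atMost_Suc)
  also have "\<dots> = (\<Sum>i<d. of_nat (Suc d choose i) * x ^ i) + of_nat (Suc d) * x ^ d"
    by (simp flip: lessThan_Suc_atMost)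
  finally have binomial: "(x + 1) ^ Suc d - x ^ Suc d - (\<Sum>i<d. of_nat (Suc d choose i) * x ^ i)
      = of_nat (Suc d) * x ^ d" by simp
  have "poly (power_sum_poly d) (x + 1) - poly (power_sum_poly d) x = inverse (of_nat (Suc d)) *
      ((x + 1) ^ Suc d - x ^ Suc d - (\<Sum>i<d. of_nat (Suc d choose i) *
        (poly (power_sum_poly i) (x + 1) - poly (power_sum_poly i) x)))"
    by (subst (1 2) power_sum_poly.simps) (simp add: poly_sum poly_monom algebra_simps sum_subtractf)
  also have "\<dots> = x ^ d"
    using binomial less by (simp del: of_nat_Suc)
  finally show ?case .
qed

lemma coeff_power_sum_poly_Rats: "coeff (power_sum_poly d) i \<in> \<rat>"
proof (induction d arbitrary: i rule: less_induct)
  case (less d)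
  then show ?case
    by (subst power_sum_poly.simps) (auto simp: coeff_sum coeff_monom
        intro!: Rats_mult Rats_inverse Rats_add Rats_diff Rats_sum Rats_of_nat)
qed

definition indef_sum_poly :: "'a::field_char_0 poly \<Rightarrow> 'a poly" where
  "indef_sum_poly q = (\<Sum>i\<le>degree q. smult (coeff q i) (power_sum_poly i))"

lemma indef_sum_poly_altdef:
  "degree q \<le> N \<Longrightarrow> indef_sum_poly q = (\<Sum>i\<le>N. smult (coeff q i) (power_sum_poly i))"
  unfolding indef_sum_poly_def by (rule sum.mono_neutral_left) (auto simp: coeff_eq_0)

lemma indef_sum_poly_add: "indef_sum_poly (p + q) = indef_sum_poly p + indef_sum_poly q"
proof -
  define N where "N = max (degree p) (degree q)"
  have "degree (p + q) \<le> N"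
    unfolding N_def by (rule degree_add_le) auto
  then show ?thesis
    by (simp add: indef_sum_poly_altdef [of _ N] N_def smult_add_left sum.distrib)
qed

lemma indef_sum_poly_const: "indef_sum_poly [:c:] = [:0, c:]"
  by (simp add: indef_sum_poly_def power_sum_poly_0)

lemma poly_indef_sum_poly_diff:
  "poly (indef_sum_poly q) (x + 1) - poly (indef_sum_poly q) x = poly q x"
  unfolding indef_sum_poly_def poly_altdef [of q x]
  by (simp add: poly_sum poly_power_sum_poly_diff flip: sum_subtractf right_diff_distrib)

lemma poly_indef_sum_poly_0: "poly (indef_sum_poly q) 0 = 0"
  by (simp add: indef_sum_poly_def poly_sum poly_power_sum_poly_0)

lemma degree_indef_sum_poly: "degree (indef_sum_poly q) \<le> Suc (degree q)"
  unfolding indef_sum_poly_def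
  by (rule degree_sum_le) (auto intro: order.trans [OF degree_smult_le] order.trans [OF degree_power_sum_poly])

lemma coeffs_below_indef_sum_poly: "coeffs_below N q \<Longrightarrow> coeffs_below N (indef_sum_poly q)"
  unfolding indef_sum_poly_def
  by (intro coeffs_below_sum coeffs_below_smult coeffs_below_Rats coeff_power_sum_poly_Rats)
    (simp add: coeffs_below_def)

text \<open>\<open>gam_poly A m\<close> is the coefficient of \<open>x ^ m\<close> in the solution \<open>\<Gamma>(y, x)\<close> of
  \<open>\<Gamma>(y + 1, x) (1 + y x) = \<Gamma>(y, x) (1 + A(x) x\<^sup>2)\<close> with \<open>\<Gamma>(0, x) = 1\<close>, as a polynomial in \<open>y\<close>;
  the recursion is this equation read off at \<open>x ^ (m + 1)\<close>.\<close>

fun gam_poly :: "'a::field_char_0 fps \<Rightarrow> nat \<Rightarrow> 'a poly" where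
  "gam_poly A 0 = 1"
| "gam_poly A (Suc m) = indef_sum_poly
     ((\<Sum>i<m. smult (fps_nth A (m - 1 - i)) (gam_poly A i)) - [:0, 1:] * pcompose (gam_poly A m) [:1, 1:])"

declare gam_poly.simps(2) [simp del]

lemma poly_gam_poly_Suc_diff:
  "poly (gam_poly A (Suc m)) (x + 1) - poly (gam_poly A (Suc m)) x
     = (\<Sum>i<m. fps_nth A (m - 1 - i) * poly (gam_poly A i) x) - x * poly (gam_poly A m) (x + 1)"
  by (simp only: gam_poly.simps(2) poly_indef_sum_poly_diff) (simp add: poly_sum poly_pcompose add.commute)

lemma poly_gam_poly_0: "poly (gam_poly A m) 0 = (if m = 0 then 1 else 0)"
  by (cases m) (simp_all add: gam_poly.simps(2) poly_indef_sum_poly_0)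

lemma degree_gam_poly: "degree (gam_poly A m) \<le> 2 * m"
proof (induction m rule: less_induct)
  case (less m)
  show ?case
  proof (cases m)
    case (Suc k)
    define R where "R = (\<Sum>i<k. smult (fps_nth A (k - 1 - i)) (gam_poly A i))
      - [:0, 1:] * pcompose (gam_poly A k) [:1, 1:]"
    have "degree (\<Sum>i<k. smult (fps_nth A (k - 1 - i)) (gam_poly A i)) \<le> Suc (2 * k)"
    proof (rule degree_sum_le)
      fix i assume "i \<in> {..<k}"
      then show "degree (smult (fps_nth A (k - 1 - i)) (gam_poly A i)) \<le> Suc (2 * k)"
        using less [of i] Suc by (intro order.trans [OF degree_smult_le]) simp
    qed simp
    moreover have "degree ([:0, 1:] * pcompose (gam_poly A k) [:1, 1:]) \<le> Suc (2 * k)"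
      using less [of k] Suc order.trans [OF degree_mult_le] by (force simp: degree_pcompose)
    ultimately have "degree R \<le> Suc (2 * k)"
      unfolding R_def by (rule degree_diff_le)
    then show ?thesis
      unfolding Suc gam_poly.simps(2) R_def [symmetric]
      by (intro order.trans [OF degree_indef_sum_poly]) simp
  qed simp
qed

definition gam_fps :: "'a::field_char_0 fps \<Rightarrow> 'a \<Rightarrow> 'a fps" where
  "gam_fps A x = Abs_fps (\<lambda>m. poly (gam_poly A m) x)"

lemma gam_fps_0: "gam_fps A 0 = 1"
  by (rule fps_ext) (simp add: gam_fps_def poly_gam_poly_0)

lemma gam_fps_shift:
  "gam_fps A (x + 1) * (1 + fps_const x * fps_X) = gam_fps A x * (1 + A * fps_X ^ 2)"
proof (rule fps_ext)
  fix n
  have "gam_fps A (x + 1) * (1 + fps_const x * fps_X)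
      = gam_fps A (x + 1) + fps_const x * (fps_X * gam_fps A (x + 1))"
    by (simp add: algebra_simps)
  then have lhs: "fps_nth (gam_fps A (x + 1) * (1 + fps_const x * fps_X)) n
      = poly (gam_poly A n) (x + 1) + (if n = 0 then 0 else x * poly (gam_poly A (n - 1)) (x + 1))"
    by (simp add: gam_fps_def)
  have rhs_split: "gam_fps A x * (1 + A * fps_X ^ 2) = gam_fps A x + (gam_fps A x * A) * fps_X ^ 2"
    by (simp add: algebra_simps)
  have rhs: "fps_nth (gam_fps A x * (1 + A * fps_X ^ 2)) n = poly (gam_poly A n) x +
      (if n < 2 then 0 else (\<Sum>i = 0..n - 2. poly (gam_poly A i) x * fps_nth A (n - 2 - i)))"
    unfolding rhs_split fps_add_nth fps_X_power_mult_right_nth by (simp add: fps_mult_nth gam_fps_def)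
  show "fps_nth (gam_fps A (x + 1) * (1 + fps_const x * fps_X)) n
      = fps_nth (gam_fps A x * (1 + A * fps_X ^ 2)) n"
  proof (cases n)
    case (Suc m)
    have "(\<Sum>i<m. fps_nth A (m - 1 - i) * poly (gam_poly A i) x) =
        (if n < 2 then 0 else (\<Sum>i = 0..n - 2. poly (gam_poly A i) x * fps_nth A (n - 2 - i)))"
      using Suc by (cases m) (auto simp: mult.commute atLeast0AtMost lessThan_Suc_atMost)
    then show ?thesis
      using lhs rhs Suc poly_gam_poly_Suc_diff [of A m x] by (simp add: algebra_simps)
  qed (simp add: lhs rhs gam_fps_def)
qed

lemma Gser_eq_gam_fps: "Gser j = gam_fps aser (of_nat j)"
proof (induction j)
  case 0
  then show ?case by (simp add: Gser_def gam_fps_0)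
next
  case (Suc j)
  define B :: "ratfun_q fps" where "B = 1 + fps_const (of_nat j) * fps_X"
  have "Gser (Suc j) = Gser j * ((1 + aser * fps_X ^ 2) / B)"
    by (simp add: Gser_def B_def prod.atLeast0_lessThan_Suc fps_of_nat)
  also have "\<dots> = gam_fps aser (of_nat j + 1) * (B * inverse B)"
    using gam_fps_shift [of aser "of_nat j"]
    by (simp add: Suc B_def fps_divide_unit mult.assoc [symmetric])
  also have "\<dots> = gam_fps aser (of_nat (Suc j))"
    by (simp add: B_def inverse_mult_eq_1' add.commute)
  finally show ?case .
qed

lemma Hser_eq_gam_fps: "Hser (Suc k) = gam_fps aser (- of_nat k)"
proof (induction k)
  case 0
  then show ?case by (simp add: Hser_def gam_fps_0)
next
  case (Suc k)
  define B :: "ratfun_q fps" where "B = 1 + fps_const (- of_nat (Suc k)) * fps_X"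
  have "{1 - int (Suc (Suc k)) .. -1} = insert (- int (Suc k)) {1 - int (Suc k) .. -1}"
    by auto
  then have "Hser (Suc (Suc k)) = B / (1 + aser * fps_X ^ 2) * Hser (Suc k)"
    by (simp add: Hser_def B_def fps_of_int [symmetric])
  also have "\<dots> = gam_fps aser (- of_nat (Suc k))
      * ((1 + aser * fps_X ^ 2) * inverse (1 + aser * fps_X ^ 2))"
    using gam_fps_shift [of aser "- of_nat (Suc k)"]
    by (simp add: Suc B_def fps_divide_unit mult_ac)
  also have "\<dots> = gam_fps aser (- of_nat (Suc k))"
    by (simp add: inverse_mult_eq_1')
  finally show ?case .
qed

definition gam_antisym_poly :: "'a::field_char_0 fps \<Rightarrow> nat \<Rightarrow> 'a poly" where
  "gam_antisym_poly A m = gam_poly A m - pcompose (gam_poly A m) [:1, -1:]"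

lemma poly_gam_antisym_poly:
  "poly (gam_antisym_poly A m) x = poly (gam_poly A m) x - poly (gam_poly A m) (1 - x)"
  by (simp add: gam_antisym_poly_def poly_pcompose)

lemma poly_gam_antisym_poly_reflect:
  "poly (gam_antisym_poly A m) (1 - x) = - poly (gam_antisym_poly A m) x"
  by (simp add: poly_gam_antisym_poly)

text \<open>The coefficient of \<open>x ^ (n - 1)\<close> in \<open>(\<Gamma>(j, x) - \<Gamma>(1 - j, x)) / x\<^sup>2 \<cdot> (1 + A(x) x\<^sup>2)\<close>, as a
  polynomial in \<open>j\<close>.\<close>

definition target_coeff_poly :: "'a::field_char_0 fps \<Rightarrow> nat \<Rightarrow> 'a poly" where
  "target_coeff_poly A n =
     (\<Sum>i<n. smult (fps_nth (1 + A * fps_X ^ 2) (n - 1 - i)) (gam_antisym_poly A (i + 2)))"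

lemma poly_target_coeff_poly_reflect:
  "poly (target_coeff_poly A n) (1 - x) = - poly (target_coeff_poly A n) x"
  by (simp add: target_coeff_poly_def poly_sum poly_gam_antisym_poly_reflect sum_negf)

lemma nth_Gser_Hser_eq_target_coeff_poly:
  assumes "n \<ge> 1" "j \<ge> 1"
  shows "fps_nth ((Gser j - Hser j) / fps_X ^ 2 * (1 + aser * fps_X ^ 2)) (n - 1)
    = poly (target_coeff_poly aser n) (of_nat j)"
proof -
  obtain k where k: "j = Suc k"
    using assms(2) by (cases j) auto
  have "fps_nth (Gser j - Hser j) m = poly (gam_antisym_poly aser m) (of_nat j)" for m
    by (simp add: Gser_eq_gam_fps k Hser_eq_gam_fps gam_fps_def poly_gam_antisym_poly)
  moreover have "{0..n - 1} = {..<n}"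
    using assms(1) by auto
  ultimately show ?thesis
    by (simp add: fps_divide_X_power fps_mult_nth target_coeff_poly_def poly_sum mult.commute)
qed

lemma int_eq_by_forward_differences:
  fixes f g :: "'a::ring_1 \<Rightarrow> 'b::ab_group_add"
  assumes "\<And>t::int. f (of_int t + 1) - f (of_int t) = g (of_int t + 1) - g (of_int t)"
    and "f 0 = g 0"
  shows "f (of_int t) = g (of_int t)"
proof (induction t rule: int_induct [where k = 0])
  case base
  then show ?case using assms(2) by simp
next
  case (step1 i)
  then show ?case using assms(1) [of i] by (simp add: algebra_simps)
next
  case (step2 i)
  then show ?case using assms(1) [of "i - 1"] by (simp add: algebra_simps)
qed

lemma poly_gam_poly_1_of_int:
  "poly (gam_poly A 1) (of_int t) = - (of_int t ^ 2 - of_int t) / 2"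
proof (rule int_eq_by_forward_differences [where g = "\<lambda>x. - (x ^ 2 - x) / 2"])
  fix t :: int
  show "poly (gam_poly A 1) (of_int t + 1) - poly (gam_poly A 1) (of_int t) =
      - ((of_int t + 1) ^ 2 - (of_int t + 1)) / 2 - - ((of_int t) ^ 2 - of_int t) / 2"
    using poly_gam_poly_Suc_diff [of A 0 "of_int t"] by (simp add: field_simps power2_eq_square)
qed (simp add: poly_gam_poly_0)

lemma poly_gam_poly_2_of_int:
  fixes A :: "'a::field_char_0 fps"
  defines "g \<equiv> \<lambda>x. fps_nth A 0 * x + (3 * x\<^sup>2 * (x - 1)\<^sup>2 + 2 * x * (x - 1) * (2 * x - 1)) / 24"
  shows "poly (gam_poly A 2) (of_int t) = g (of_int t)"
proof (rule int_eq_by_forward_differences [where g = g])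
  fix t :: int
  define x :: 'a where "x = of_int t"
  have "poly (gam_poly A 2) (x + 1) - poly (gam_poly A 2) x
      = fps_nth A 0 - x * poly (gam_poly A 1) (of_int (t + 1))"
    using poly_gam_poly_Suc_diff [of A 1 x] by (simp add: x_def numeral_2_eq_2)
  also have "\<dots> = g (x + 1) - g x"
    unfolding poly_gam_poly_1_of_int by (simp add: g_def x_def field_simps power2_eq_square)
  finally show "poly (gam_poly A 2) (of_int t + 1) - poly (gam_poly A 2) (of_int t) =
      g (of_int t + 1) - g (of_int t)"
    by (simp add: x_def)
qed (simp add: g_def poly_gam_poly_0)

lemma poly_target_coeff_poly_1_of_int:
  fixes A :: "'a::field_char_0 fps"
  shows "poly (target_coeff_poly A 1) (of_int t)
    = (2 * of_int t - 1) * (fps_nth A 0 + (of_int t ^ 2 - of_int t) / 6)"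
proof -
  have "poly (target_coeff_poly A 1) (of_int t) =
      poly (gam_poly A 2) (of_int t) - poly (gam_poly A 2) (of_int (1 - t))"
    by (simp add: target_coeff_poly_def poly_gam_antisym_poly numeral_2_eq_2)
  then show ?thesis
    by (simp only: poly_gam_poly_2_of_int) (simp add: field_simps power2_eq_square)
qed

lemma nth_aser: "fps_nth aser k = emb (mp_var k)"
  by (simp add: aser_def)

lemma nth_aser_in_polys_below: "k < N \<Longrightarrow> fps_nth aser k \<in> polys_below N"
  by (simp add: nth_aser var_in_polys_below)

lemma coeffs_below_gam_poly: "coeffs_below (m - 1) (gam_poly aser m)"
proof (induction m rule: less_induct)
  case (less m)
  show ?case
  proof (cases m)
    case 0
    then show ?thesis by (simp add: coeffs_below_Rats coeff_1)
  next
    case (Suc k)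
    have "coeffs_below k (smult (fps_nth aser (k - 1 - i)) (gam_poly aser i))" if "i < k" for i
      using that less [of i] Suc
      by (auto intro!: coeffs_below_smult nth_aser_in_polys_below elim: coeffs_below_mono)
    then have "coeffs_below k (\<Sum>i<k. smult (fps_nth aser (k - 1 - i)) (gam_poly aser i))"
      by (auto intro: coeffs_below_sum)
    moreover have "coeffs_below k ([:0, 1:] * pcompose (gam_poly aser k) [:1, 1:])"
      using less [of k] Suc
      by (auto intro!: coeffs_below_pCons coeffs_below_pcompose coeffs_below_linear
          Rats_in_polys_below elim: coeffs_below_mono)
    ultimately show ?thesis
      by (simp add: Suc gam_poly.simps(2) coeffs_below_indef_sum_poly coeffs_below_diff)
  qed
qed

lemma coeffs_below_gam_poly_le: "i \<le> Suc m \<Longrightarrow> coeffs_below m (gam_poly aser i)"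
  using coeffs_below_gam_poly [of i] by (rule coeffs_below_mono) simp

lemma coeffs_below_gam_poly_minus_var:
  "coeffs_below m (gam_poly aser (m + 2) - [:0, emb (mp_var m):])"
proof -
  define Q where "Q = (\<Sum>i<m. smult (fps_nth aser (m - Suc i)) (gam_poly aser (Suc i)))
    - [:0, 1:] * pcompose (gam_poly aser (Suc m)) [:1, 1:]"
  have "gam_poly aser (m + 2) = indef_sum_poly
      ((\<Sum>i<Suc m. smult (fps_nth aser (m - i)) (gam_poly aser i))
        - [:0, 1:] * pcompose (gam_poly aser (Suc m)) [:1, 1:])"
    by (simp add: gam_poly.simps(2) [of _ "Suc m"])
  also have "\<dots> = indef_sum_poly ([:emb (mp_var m):] + Q)"
    by (subst sum.lessThan_Suc_shift) (simp add: Q_def nth_aser add_diff_eq)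
  finally have "gam_poly aser (m + 2) = indef_sum_poly ([:emb (mp_var m):] + Q)" .
  then have "gam_poly aser (m + 2) - [:0, emb (mp_var m):] = indef_sum_poly Q"
    by (simp add: indef_sum_poly_add indef_sum_poly_const)
  moreover have "coeffs_below m Q"
    unfolding Q_def
    by (auto intro!: coeffs_below_diff coeffs_below_sum coeffs_below_smult nth_aser_in_polys_below
        coeffs_below_gam_poly_le coeffs_below_pCons coeffs_below_pcompose coeffs_below_linear
        Rats_in_polys_below [OF Rats_0])
  ultimately show ?thesis
    by (simp add: coeffs_below_indef_sum_poly)
qed

text \<open>Since \<open>x = ((2 x - 1) + 1) / 2\<close> and \<open>x (2 x - 1) = 2 (x\<^sup>2 - x) + x\<close>, multiplying by \<open>x\<close>
  preserves the shape \<open>A(x\<^sup>2 - x) + (2 x - 1) B(x\<^sup>2 - x)\<close>.\<close>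

lemma reflect_decomposition_step:
  fixes A B :: "'a::field_char_0 poly"
  shows "c + x * (poly A (x\<^sup>2 - x) + (2 * x - 1) * poly B (x\<^sup>2 - x)) =
    poly ([:c:] + smult (1 / 2) A + [:1 / 2, 2:] * B) (x\<^sup>2 - x)
      + (2 * x - 1) * poly (smult (1 / 2) (A + B)) (x\<^sup>2 - x)"
proof -
  define a b where "a = poly A (x\<^sup>2 - x)" and "b = poly B (x\<^sup>2 - x)"
  show ?thesis
    unfolding a_def [symmetric] b_def [symmetric] poly_add poly_smult poly_mult poly_pCons poly_0
    by (simp add: field_simps power2_eq_square)
qed

lemma reflect_decomposition:
  assumes "degree P \<le> k" "coeffs_below N P"
  shows "\<exists>A B. coeffs_below N A \<and> coeffs_below N B \<and> degree A \<le> k div 2 \<and>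
     degree B \<le> (k - 1) div 2 \<and> (k = 0 \<longrightarrow> B = 0) \<and>
     (\<forall>x. poly P x = poly A (x\<^sup>2 - x) + (2 * x - 1) * poly B (x\<^sup>2 - x))"
  using assms
proof (induction k arbitrary: P)
  case 0
  then obtain c where "P = [:c:]"
    by (auto elim: degree_eq_zeroE)
  with "0" show ?case
    by (intro exI [of _ P] exI [of _ 0]) (simp add: coeffs_below_0)
next
  case (Suc k)
  obtain c P' where P: "P = pCons c P'"
    by (cases P)
  have "degree P' \<le> k"
    using Suc.prems(1) P by (auto split: if_splits)
  moreover have "c \<in> polys_below N" "coeffs_below N P'"
    using Suc.prems(2) unfolding P coeffs_below_def by (metis coeff_pCons_0, metis coeff_pCons_Suc)
  ultimately obtain A' B' where IH: "coeffs_below N A'" "coeffs_below N B'" "degree A' \<le> k div 2"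
      "degree B' \<le> (k - 1) div 2" "k = 0 \<longrightarrow> B' = 0"
      "\<forall>x. poly P' x = poly A' (x\<^sup>2 - x) + (2 * x - 1) * poly B' (x\<^sup>2 - x)"
    using Suc.IH by blast
  define A where "A = [:c:] + smult (1 / 2) A' + [:1 / 2, 2:] * B'"
  define B where "B = smult (1 / 2) (A' + B')"
  have "coeffs_below N A" "coeffs_below N B"
    unfolding A_def B_def using IH \<open>c \<in> polys_below N\<close>
    by (auto intro!: coeffs_below_add coeffs_below_smult coeffs_below_mult coeffs_below_pCons
        coeffs_below_0 Rats_in_polys_below)
  moreover have "degree B \<le> (Suc k - 1) div 2"
    unfolding B_def using IH(3,4)
    by (intro order.trans [OF degree_smult_le] degree_add_le) (auto intro: order.trans [of _ "(k - 1) div 2"])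
  moreover have "degree A \<le> Suc k div 2"
  proof -
    have "degree ([:1 / 2, 2:] * B') \<le> Suc k div 2"
    proof (cases "k = 0")
      case False
      have "degree ([:1 / 2, 2:] * B') \<le> 1 + (k - 1) div 2"
        using IH(4) by (intro order.trans [OF degree_mult_le]) simp
      also have "\<dots> = Suc k div 2"
        using False by linarith
      finally show ?thesis .
    qed (use IH(5) in simp)
    then show ?thesis
      unfolding A_def using IH(3)
      by (intro degree_add_le) (auto intro: order.trans [OF degree_smult_le] order.trans [of _ "k div 2"])
  qed
  moreover have "poly P x = poly A (x\<^sup>2 - x) + (2 * x - 1) * poly B (x\<^sup>2 - x)" for x
    unfolding P A_def B_def poly_pCons IH(6) [rule_format] by (rule reflect_decomposition_step)
  ultimately show ?case
    by blast
qed

lemma reflect_antisymmetric_factor: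
  assumes "degree P \<le> k" "coeffs_below N P" "\<And>x. poly P (1 - x) = - poly P x"
  shows "\<exists>B. coeffs_below N B \<and> degree B \<le> (k - 1) div 2 \<and>
    (\<forall>x. poly P x = (2 * x - 1) * poly B (x\<^sup>2 - x))"
proof -
  obtain A B where AB: "coeffs_below N B" "degree B \<le> (k - 1) div 2"
      "\<forall>x. poly P x = poly A (x\<^sup>2 - x) + (2 * x - 1) * poly B (x\<^sup>2 - x)"
    using reflect_decomposition [OF assms(1,2)] by blast
  have "poly A (x\<^sup>2 - x) = 0" for x
  proof -
    have "(1 - x)\<^sup>2 - (1 - x) = x\<^sup>2 - x"
      by (simp add: algebra_simps power2_eq_square)
    then have reflected: "poly P (1 - x) = poly A (x\<^sup>2 - x) + (1 - 2 * x) * poly B (x\<^sup>2 - x)"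
      using AB(3) [rule_format, of "1 - x"] by (simp only:) (simp add: algebra_simps)
    have "poly P x + poly P (1 - x) = 2 * poly A (x\<^sup>2 - x)"
      by (simp only: reflected AB(3) [rule_format, of x]) (simp add: algebra_simps)
    then show ?thesis
      using assms(3) [of x] by simp
  qed
  with AB show ?thesis
    by auto
qed

lemma degree_gam_antisym_poly: "degree (gam_antisym_poly A m) \<le> 2 * m"
  unfolding gam_antisym_poly_def using degree_gam_poly [of A m]
  by (intro degree_diff_le) (simp_all add: degree_pcompose)

lemma degree_target_coeff_poly: "degree (target_coeff_poly A n) \<le> 2 * n + 2"
  unfolding target_coeff_poly_def
  by (intro degree_sum_le order.trans [OF degree_smult_le] order.trans [OF degree_gam_antisym_poly]) auto

lemma coeffs_below_gam_antisym_poly: "i \<le> Suc m \<Longrightarrow> coeffs_below m (gam_antisym_poly aser i)"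
  unfolding gam_antisym_poly_def
  by (intro coeffs_below_diff coeffs_below_pcompose coeffs_below_linear coeffs_below_gam_poly_le) simp_all

lemma nth_one_plus_aser_X2_in_polys_below:
  "k \<le> N + 1 \<Longrightarrow> fps_nth (1 + aser * fps_X ^ 2) k \<in> polys_below N"
  by (auto simp: fps_X_power_mult_right_nth
      intro!: polys_below_add nth_aser_in_polys_below intro: Rats_in_polys_below)

lemma target_coeff_poly_factor:
  obtains B where "coeffs_below k B" "degree B \<le> Suc k"
    "\<And>x. poly (target_coeff_poly aser (Suc k)) x = (2 * x - 1) * (emb (mp_var k) + poly B (x\<^sup>2 - x))"
proof -
  define h where "h = gam_poly aser (k + 2) - [:0, emb (mp_var k):]"
  define P where "P = target_coeff_poly aser (Suc k) - smult (emb (mp_var k)) [:-1, 2:]"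
  have "gam_antisym_poly aser (k + 2) = smult (emb (mp_var k)) [:-1, 2:] + (h - pcompose h [:1, -1:])"
    by (simp add: gam_antisym_poly_def h_def pcompose_diff pcompose_pCons algebra_simps)
  then have P_eq: "P = (\<Sum>i<k. smult (fps_nth (1 + aser * fps_X ^ 2) (k - i)) (gam_antisym_poly aser (i + 2)))
      + (h - pcompose h [:1, -1:])"
    by (simp add: P_def target_coeff_poly_def)
  have "coeffs_below k h"
    unfolding h_def by (rule coeffs_below_gam_poly_minus_var)
  then have "coeffs_below k P"
    unfolding P_eq
    by (intro coeffs_below_add coeffs_below_sum coeffs_below_smult coeffs_below_diff
        coeffs_below_pcompose coeffs_below_linear coeffs_below_gam_antisym_poly
        nth_one_plus_aser_X2_in_polys_below) auto
  moreover have "degree P \<le> 2 * Suc k + 2"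
    unfolding P_def using degree_target_coeff_poly [of aser "Suc k"]
    by (intro degree_diff_le order.trans [OF degree_smult_le]) auto
  moreover have "poly P (1 - x) = - poly P x" for x
    by (simp add: P_def poly_target_coeff_poly_reflect algebra_simps)
  ultimately obtain B where "coeffs_below k B" "degree B \<le> Suc k"
      "\<forall>x. poly P x = (2 * x - 1) * poly B (x\<^sup>2 - x)"
    using reflect_antisymmetric_factor [of P "2 * Suc k + 2" k] by auto
  then show ?thesis
    by (intro that [of B]) (simp_all add: P_def algebra_simps)
qed

lemma nth_Gser_Hser_expansion:
  "\<exists>s. n \<ge> 1 \<longrightarrow> (\<forall>i. mp_vars (s i) \<subseteq> {k. k + 2 \<le> n}) \<and>
    (\<forall>j\<ge>1. fps_nth ((Gser j - Hser j) / fps_X ^ 2 * (1 + aser * fps_X ^ 2)) (n - 1)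
        = of_nat (2 * j - 1) * (emb (mp_var (n - 1)) + (\<Sum>i\<le>n. emb (s i) * of_nat (j * (j - 1)) ^ i)))"
proof (cases n)
  case (Suc k)
  obtain B where B: "coeffs_below k B" "degree B \<le> Suc k"
      "\<And>x. poly (target_coeff_poly aser (Suc k)) x = (2 * x - 1) * (emb (mp_var k) + poly B (x\<^sup>2 - x))"
    using target_coeff_poly_factor [where k = k] by blast
  have "\<forall>i. \<exists>p. mp_vars p \<subseteq> {k. k + 2 \<le> n} \<and> emb p = coeff B i"
  proof
    fix i
    have "coeff B i \<in> polys_below k"
      using B(1) by (simp add: coeffs_below_def)
    then obtain p where "coeff B i = emb p" "p \<in> {p. mp_vars p \<subseteq> {..<k}}"
      unfolding polys_below_def by (rule imageE)
    with Suc show "\<exists>p. mp_vars p \<subseteq> {k. k + 2 \<le> n} \<and> emb p = coeff B i"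
      by (intro exI [of _ p]) auto
  qed
  then obtain s where s: "\<forall>i. mp_vars (s i) \<subseteq> {k. k + 2 \<le> n} \<and> emb (s i) = coeff B i"
    by (rule choice [THEN exE])
  have "poly B v = (\<Sum>i\<le>n. emb (s i) * v ^ i)" for v
    unfolding poly_altdef using B(2) s Suc
    by (intro sum.mono_neutral_cong_left) (auto simp: coeff_eq_0)
  moreover have "of_nat (2 * j - 1) = 2 * of_nat j - (1 :: ratfun_q)"
    and "of_nat (j * (j - 1)) = (of_nat j)\<^sup>2 - (of_nat j :: ratfun_q)" if "j \<ge> 1" for j
    using that by (simp_all add: of_nat_diff power2_eq_square algebra_simps)
  ultimately show ?thesis
    using s B(3) Suc nth_Gser_Hser_eq_target_coeff_poly [of n] by (intro exI [of _ s]) auto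
qed simp

lemma nth_Gser_Hser_1:
  assumes "j \<ge> 1"
  shows "fps_nth ((Gser j - Hser j) / fps_X ^ 2 * (1 + aser * fps_X ^ 2)) 0
    = of_nat (2 * j - 1) * (emb (mp_var 0) + emb (mp_const (1 / 6)) * of_nat (j * (j - 1)))"
proof -
  have "fps_nth ((Gser j - Hser j) / fps_X ^ 2 * (1 + aser * fps_X ^ 2)) 0
      = poly (target_coeff_poly aser 1) (of_int (int j))"
    using nth_Gser_Hser_eq_target_coeff_poly [of 1 j] assms by simp
  also have "\<dots> = (2 * of_nat j - 1) * (emb (mp_var 0) + ((of_nat j)\<^sup>2 - of_nat j) / 6)"
    using poly_target_coeff_poly_1_of_int [of aser "int j"] by (simp add: nth_aser)
  also have "\<dots> = of_nat (2 * j - 1) * (emb (mp_var 0) + emb (mp_const (1 / 6)) * of_nat (j * (j - 1)))"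
    using assms by (simp add: emb_mp_const of_rat_divide of_nat_diff power2_eq_square field_simps)
  finally show ?thesis .
qed

theorem lemma2p2:
  "\<exists>S :: nat \<Rightarrow> nat \<Rightarrow> mpoly_q.
     (\<forall>n\<ge>1. \<forall>i. mp_vars (S i n) \<subseteq> {k. k + 2 \<le> n}) \<and>
     (\<forall>n\<ge>1. \<forall>j::nat. j \<ge> 1 \<longrightarrow>
        fps_nth ((Gser j - Hser j) / fps_X ^ 2 * (1 + aser * fps_X ^ 2)) (n - 1)
        = of_nat (2 * j - 1) *
          (emb (mp_var (n - 1)) + (\<Sum>i\<le>n. emb (S i n) * of_nat (j * (j - 1)) ^ i))) \<and>
     S 0 1 = 0 \<and> S 1 1 = mp_const (1 / 6)"
proof -
  obtain s where s: "\<forall>n\<ge>1. (\<forall>i. mp_vars (s n i) \<subseteq> {k. k + 2 \<le> n}) \<and>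
    (\<forall>j\<ge>1. fps_nth ((Gser j - Hser j) / fps_X ^ 2 * (1 + aser * fps_X ^ 2)) (n - 1)
        = of_nat (2 * j - 1) * (emb (mp_var (n - 1)) + (\<Sum>i\<le>n. emb (s n i) * of_nat (j * (j - 1)) ^ i)))"
    by (rule choice [THEN exE], rule allI, rule nth_Gser_Hser_expansion)
  define S where "S i n = (if n = 1 then (if i = 1 then mp_const (1 / 6) else 0) else s n i)" for i n
  have "fps_nth ((Gser j - Hser j) / fps_X ^ 2 * (1 + aser * fps_X ^ 2)) (n - 1)
      = of_nat (2 * j - 1) * (emb (mp_var (n - 1)) + (\<Sum>i\<le>n. emb (S i n) * of_nat (j * (j - 1)) ^ i))"
    if "n \<ge> 1" "j \<ge> 1" for n j
  proof (cases "n = 1")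
    case True
    then have "(\<Sum>i\<le>n. emb (S i n) * v ^ i) = emb (mp_const (1 / 6)) * v" for v
      by (simp add: S_def emb_def Zero_fract_def)
    with True show ?thesis
      using nth_Gser_Hser_1 [OF that(2)] by simp
  qed (use s that in \<open>simp add: S_def\<close>)
  moreover have "mp_vars (S i n) \<subseteq> {k. k + 2 \<le> n}" if "n \<ge> 1" for n i
    using s that mp_vars_mp_const by (auto simp: S_def mp_vars_def)
  ultimately show ?thesis
    by (intro exI [of _ S]) (simp add: S_def)
qed

end
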